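(* For every integer $N\ge 0$, let $T_{2\times 3}(8,N)$ be the number of tilings of an $8\times n$ rectangle, $n=3N/4$, by $N$ tiles of size $2\times 3$ (and $0$ if $3N/4\notin\mathbb{Z}$). Then, as formal power series, \[ \sum_{N\ge 0} T_{2\times 3}(8,N)\,z^N=\frac{(1-z^4)^2}{1-3z^4+z^{12}-z^{16}}. \]
   Context: A tiling of an $m\times n$ rectangle (width $m$, length $n$, made of $mn$ unit squares) by $a\times b$ tiles is a partition of the rectangle into non-overlapping axis-parallel $a\times b$ rectangles with integer corner coordinates, each placed in either of its two orientations. Tilings related by reflections or rotations of the rectangle are counted as distinct. The empty tiling counts once for $N=0$. *)

theory Defs
  imports "HOL-Computational_Algebra.Formal_Power_Series"
begin

text \<open>A cell is a unit square, identified by the integer coordinates (i,j) of its lower-left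
corner. The m x n rectangle (width m, length n) is the set of cells {0..<m} x {0..<n}.\<close>

definition rect :: "nat \<Rightarrow> nat \<Rightarrow> (nat \<times> nat) set" where
  "rect m n = {0..<m} \<times> {0..<n}"

definition is_tile :: "nat \<Rightarrow> nat \<Rightarrow> (nat \<times> nat) set \<Rightarrow> bool" where
  "is_tile a b t \<longleftrightarrow> (\<exists>x y. t = {x..<x+a} \<times> {y..<y+b} \<or> t = {x..<x+b} \<times> {y..<y+a})"

definition is_tiling :: "nat \<Rightarrow> nat \<Rightarrow> nat \<Rightarrow> nat \<Rightarrow> (nat \<times> nat) set set \<Rightarrow> bool" where
  "is_tiling a b m n T \<longleftrightarrow>
     (\<forall>t\<in>T. is_tile a b t) \<and>
     (\<forall>t\<in>T. \<forall>u\<in>T. t \<noteq> u \<longrightarrow> t \<inter> u = {}) \<and>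
     \<Union>T = rect m n"

definition num_tilings :: "nat \<Rightarrow> nat \<Rightarrow> nat \<Rightarrow> nat \<Rightarrow> nat \<Rightarrow> nat" where
  "num_tilings a b m n N = card {T. is_tiling a b m n T \<and> card T = N}"

definition T23_8 :: "nat \<Rightarrow> nat" where
  "T23_8 N = (if 4 dvd 3 * N then num_tilings 2 3 8 (3 * N div 4) N else 0)"

end

theory Submission
  imports Defs "HOL-Computational_Algebra.Polynomial_FPS"
begin

(*
  Transfer-matrix method.  Tiles are always placed so as to cover the lowest uncovered cell of
  the strip, so a partial tiling is described by a profile: the covered length of each of the 8
  lines of the strip, normalized to have minimum 0.  Only 45 profiles are reachable from the flat
  one.  Graded by the number of tiles, the generating functions G_q of the tilings above the
  profiles satisfy G_q = [q flat] + z * (sum of G_q' over the one-tile successors q' of q), a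
  system with a unique solution in formal power series.  Multiplied by
  D = 1 - 3 z^4 + z^12 - z^16, the same system is satisfied by explicit polynomials P_q, which is
  checked by evaluation; hence D * G_q = P_q, and P_q = (1 - z^4)^2 for the flat profile.
*)

unbundle fps_syntax

section \<open>Tilings of arbitrary regions\<close>

definition tilings :: "nat \<Rightarrow> nat \<Rightarrow> (nat \<times> nat) set \<Rightarrow> (nat \<times> nat) set set set" where
  "tilings a b R = {T. (\<forall>t\<in>T. is_tile a b t) \<and> pairwise disjnt T \<and> \<Union>T = R}"

lemma is_tiling_iff_mem_tilings: "is_tiling a b m n T \<longleftrightarrow> T \<in> tilings a b (rect m n)"
  by (auto simp: is_tiling_def tilings_def pairwise_def disjnt_def)

lemma is_tile_iff:
  "is_tile a b t \<longleftrightarrow> (\<exists>x y w h. (w, h) \<in> {(a, b), (b, a)} \<and> t = {x..<x + w} \<times> {y..<y + h})"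
  unfolding is_tile_def by auto

lemma finite_tile: "is_tile a b t \<Longrightarrow> finite t"
  unfolding is_tile_def by auto

lemma card_tile: "is_tile a b t \<Longrightarrow> card t = a * b"
  unfolding is_tile_def by (auto simp: card_cartesian_product)

lemma finite_tilings: "finite R \<Longrightarrow> finite (tilings a b R)"
  by (rule finite_subset[of _ "Pow (Pow R)"]) (auto simp: tilings_def)

lemma tilings_empty: "0 < a \<Longrightarrow> 0 < b \<Longrightarrow> tilings a b {} = {{}}"
  using card_tile[of a b] by (fastforce simp: tilings_def)

lemma card_tiling:
  assumes "finite R" and "T \<in> tilings a b R"
  shows "card R = a * b * card T"
proof -
  have tiles: "\<forall>t\<in>T. is_tile a b t" and "pairwise disjnt T" and R: "R = \<Union>T"
    using assms(2) by (auto simp: tilings_def)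
  then have "card (\<Union>T) = (\<Sum>t\<in>T. card t)"
    by (intro card_Union_disjoint) (auto intro: finite_tile)
  also have "\<dots> = (\<Sum>t\<in>T. a * b)"
    using tiles by (intro sum.cong) (auto simp: card_tile)
  finally show ?thesis
    using R by simp
qed

lemma tilings_remove:
  "T \<in> tilings a b R \<Longrightarrow> t \<in> T \<Longrightarrow> T - {t} \<in> tilings a b (R - t)"
  by (auto simp: tilings_def pairwise_def disjnt_def)

lemma tilings_insert:
  "is_tile a b t \<Longrightarrow> t \<subseteq> R \<Longrightarrow> T \<in> tilings a b (R - t) \<Longrightarrow> insert t T \<in> tilings a b R"
  by (auto simp: tilings_def pairwise_def disjnt_def)

lemma card_tilings_cover_cell:
  assumes "finite R" and "c \<in> R"
  shows "card (tilings a b R) =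
    (\<Sum>t\<in>{t. is_tile a b t \<and> c \<in> t \<and> t \<subseteq> R}. card (tilings a b (R - t)))"
proof -
  define C where "C = {t. is_tile a b t \<and> c \<in> t \<and> t \<subseteq> R}"
  have finite_C: "finite C"
    by (rule finite_subset[of _ "Pow R"]) (use assms(1) in \<open>auto simp: C_def\<close>)
  have not_mem: "t \<notin> T" if "t \<in> C" "T \<in> tilings a b (R - t)" for t T
    using that unfolding C_def tilings_def by blast
  have tilings_R: "tilings a b R = (\<Union>t\<in>C. insert t ` tilings a b (R - t))"
  proof (intro equalityI subsetI)
    fix T assume T: "T \<in> tilings a b R"
    then obtain t where t: "t \<in> T" "c \<in> t"
      using assms(2) by (auto simp: tilings_def)
    have "T - {t} \<in> tilings a b (R - t)"
      using T t(1) by (rule tilings_remove)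
    moreover have "T = insert t (T - {t})"
      using t by blast
    ultimately have "T \<in> insert t ` tilings a b (R - t)"
      by (rule rev_image_eqI)
    moreover have "t \<in> C"
      using T t by (auto simp: C_def tilings_def)
    ultimately show "T \<in> (\<Union>t\<in>C. insert t ` tilings a b (R - t))"
      by blast
  next
    fix T assume "T \<in> (\<Union>t\<in>C. insert t ` tilings a b (R - t))"
    then obtain t T' where "t \<in> C" "T' \<in> tilings a b (R - t)" "T = insert t T'"
      by blast
    then show "T \<in> tilings a b R"
      by (simp add: C_def tilings_insert)
  qed
  have "card (tilings a b R) = (\<Sum>t\<in>C. card (insert t ` tilings a b (R - t)))"
    unfolding tilings_R
  proof (intro card_UN_disjoint finite_C ballI impI)
    show "finite (insert t ` tilings a b (R - t))" for t
      using assms(1) by (simp add: finite_tilings)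
    fix t u assume "t \<in> C" "u \<in> C" "t \<noteq> u"
    then have "t \<notin> insert u T" if "T \<in> tilings a b (R - u)" for T
      using that unfolding C_def tilings_def by blast
    then show "insert t ` tilings a b (R - t) \<inter> insert u ` tilings a b (R - u) = {}"
      by blast
  qed
  also have "\<dots> = (\<Sum>t\<in>C. card (tilings a b (R - t)))"
  proof (rule sum.cong[OF refl])
    fix t assume "t \<in> C"
    then have "inj_on (insert t) (tilings a b (R - t))"
      by (intro inj_onI) (metis insert_ident not_mem)
    then show "card (insert t ` tilings a b (R - t)) = card (tilings a b (R - t))"
      by (rule card_image)
  qed
  finally show ?thesis
    unfolding C_def .
qed

lemma image_mem_tilings:
  assumes "inj f" and T: "T \<in> tilings a b R" and "\<And>t. is_tile a b t \<Longrightarrow> is_tile a b (f ` t)"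
  shows "image f ` T \<in> tilings a b (f ` R)"
proof -
  have "pairwise disjnt (image f ` T)"
    unfolding pairwise_def
  proof (intro ballI impI)
    fix t' u' assume "t' \<in> image f ` T" "u' \<in> image f ` T" "t' \<noteq> u'"
    then obtain t u where "t \<in> T" "u \<in> T" "t \<noteq> u" "t' = f ` t" "u' = f ` u"
      by blast
    then show "disjnt t' u'"
      using T assms(1) by (auto simp: tilings_def pairwise_def disjnt_def simp flip: image_Int)
  qed
  then show ?thesis
    using T assms(3) by (auto simp: tilings_def)
qed

lemma vimage_mem_tilings:
  assumes "inj f" and U: "U \<in> tilings a b (f ` R)" and "\<And>t. is_tile a b (f ` t) \<Longrightarrow> is_tile a b t"
  shows "vimage f ` U \<in> tilings a b R"
  unfolding tilings_def
proof (intro CollectI conjI ballI)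
  fix t assume "t \<in> vimage f ` U"
  then obtain u where u: "u \<in> U" "t = f -` u"
    by blast
  then have "u \<subseteq> range f"
    using U unfolding tilings_def by blast
  with u have "f ` t = u"
    by blast
  then have "is_tile a b (f ` t)"
    using U u(1) by (simp add: tilings_def)
  then show "is_tile a b t"
    by (rule assms(3))
next
  show "pairwise disjnt (vimage f ` U)"
    unfolding pairwise_def
  proof (intro ballI impI)
    fix t u assume "t \<in> vimage f ` U" "u \<in> vimage f ` U" "t \<noteq> u"
    then obtain t' u' where "t' \<in> U" "u' \<in> U" "t' \<noteq> u'" "t = f -` t'" "u = f -` u'"
      by blast
    moreover from U this have "t' \<inter> u' = {}"
      unfolding tilings_def pairwise_def disjnt_def by blast
    ultimately show "disjnt t u"
      by (simp add: disjnt_def flip: vimage_Int)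
  qed
  have "\<Union>(vimage f ` U) = f -` \<Union>U"
    by (simp add: vimage_Union)
  also have "\<dots> = R"
    using U assms(1) by (simp add: tilings_def inj_vimage_image_eq)
  finally show "\<Union>(vimage f ` U) = R" .
qed

lemma card_tilings_image:
  assumes "inj f" and "\<And>t. is_tile a b (f ` t) \<longleftrightarrow> is_tile a b t"
  shows "card (tilings a b (f ` R)) = card (tilings a b R)"
proof -
  have "image (image f) ` tilings a b R = tilings a b (f ` R)"
  proof (intro equalityI subsetI)
    fix U assume "U \<in> image (image f) ` tilings a b R"
    then show "U \<in> tilings a b (f ` R)"
      using image_mem_tilings[OF assms(1)] assms(2) by blast
  next
    fix U assume U: "U \<in> tilings a b (f ` R)"
    have "f ` f -` u = u" if "u \<in> U" for u
    proof -
      have "u \<subseteq> f ` R"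
        using U that unfolding tilings_def by blast
      then show ?thesis
        by blast
    qed
    then have "U = image f ` vimage f ` U"
      by (simp add: image_image)
    moreover have "vimage f ` U \<in> tilings a b R"
      using vimage_mem_tilings[OF assms(1) U] assms(2) by blast
    ultimately show "U \<in> image (image f) ` tilings a b R"
      by blast
  qed
  moreover have "inj_on (image (image f)) (tilings a b R)"
    by (intro inj_on_image inj_on_subset[OF assms(1) subset_UNIV])
  ultimately show ?thesis
    by (metis card_image)
qed

lemma apsnd_shift_Times: "apsnd (\<lambda>y. y + m) ` (A \<times> {c..<d}) = A \<times> {c + m..<d + m :: nat}"
  by (simp add: apsnd_def map_prod_surj_on)

lemma is_tile_shift_iff:
  assumes "0 < a" "0 < b"
  shows "is_tile a b (apsnd (\<lambda>y. y + m) ` t) \<longleftrightarrow> is_tile a b t"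
proof
  assume "is_tile a b (apsnd (\<lambda>y. y + m) ` t)"
  then obtain x y w h where wh: "(w, h) \<in> {(a, b), (b, a)}"
    and shifted: "apsnd (\<lambda>y. y + m) ` t = {x..<x + w} \<times> {y..<y + h}"
    by (auto simp: is_tile_iff)
  then have "(x, y) \<in> apsnd (\<lambda>y. y + m) ` t"
    using assms by auto
  then have "m \<le> y"
    by auto
  then have "apsnd (\<lambda>y. y + m) ` ({x..<x + w} \<times> {y - m..<y - m + h}) = apsnd (\<lambda>y. y + m) ` t"
    by (simp add: apsnd_shift_Times shifted)
  then have "t = {x..<x + w} \<times> {y - m..<y - m + h}"
    by (simp add: inj_image_eq_iff inj_on_def)
  then show "is_tile a b t"
    using wh by (auto simp: is_tile_iff)
next
  assume "is_tile a b t"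
  then obtain x y w h where wh: "(w, h) \<in> {(a, b), (b, a)}" and "t = {x..<x + w} \<times> {y..<y + h}"
    by (auto simp: is_tile_iff)
  then have "apsnd (\<lambda>y. y + m) ` t = {x..<x + w} \<times> {y + m..<y + m + h}"
    by (simp add: apsnd_shift_Times ac_simps)
  with wh show "is_tile a b (apsnd (\<lambda>y. y + m) ` t)"
    unfolding is_tile_iff by blast
qed

lemma card_tilings_shift:
  assumes "0 < a" "0 < b"
  shows "card (tilings a b (apsnd (\<lambda>y. y + m) ` R)) = card (tilings a b R)"
  by (rule card_tilings_image) (simp_all add: inj_def is_tile_shift_iff[OF assms])

section \<open>Regions above a profile\<close>

(* Line i (first coordinate) of a strip of width length q is already covered up to q ! i. *)
definition profile_region :: "nat list \<Rightarrow> nat \<Rightarrow> (nat \<times> nat) set" where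
  "profile_region q L = {(i, j). i < length q \<and> q ! i \<le> j \<and> j < L}"

lemma finite_profile_region: "finite (profile_region q L)"
  by (rule finite_subset[of _ "{..<length q} \<times> {..<L}"]) (auto simp: profile_region_def)

lemma profile_region_replicate_0: "profile_region (replicate m 0) n = rect m n"
  by (auto simp: profile_region_def rect_def)

lemma profile_region_shift:
  assumes "\<forall>x\<in>set p. m \<le> x"
  shows "profile_region p (L + m) = apsnd (\<lambda>y. y + m) ` profile_region (map (\<lambda>x. x - m) p) L"
proof (intro equalityI subsetI)
  fix c assume "c \<in> profile_region p (L + m)"
  then obtain i j where c: "c = (i, j)" and "i < length p" "p ! i \<le> j" "j < L + m"
    by (auto simp: profile_region_def)
  moreover from \<open>i < length p\<close> have "m \<le> p ! i"
    using assms by simp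
  ultimately have "(i, j - m) \<in> profile_region (map (\<lambda>x. x - m) p) L" "c = apsnd (\<lambda>y. y + m) (i, j - m)"
    by (auto simp: profile_region_def)
  then show "c \<in> apsnd (\<lambda>y. y + m) ` profile_region (map (\<lambda>x. x - m) p) L"
    by (rule rev_image_eqI)
next
  fix c assume "c \<in> apsnd (\<lambda>y. y + m) ` profile_region (map (\<lambda>x. x - m) p) L"
  then obtain i j where "c = (i, j + m)" "(i, j) \<in> profile_region (map (\<lambda>x. x - m) p) L"
    by auto
  then show "c \<in> profile_region p (L + m)"
    by (auto simp: profile_region_def)
qed

definition first_gap :: "nat list \<Rightarrow> nat" where
  "first_gap q = length (takeWhile (\<lambda>x. x \<noteq> 0) q)"

lemma first_gap:
  assumes "0 \<in> set q"
  shows first_gap_less: "first_gap q < length q"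
    and nth_first_gap: "q ! first_gap q = 0"
    and nth_less_first_gap: "k < first_gap q \<Longrightarrow> q ! k \<noteq> 0"
proof -
  show less: "first_gap q < length q"
  proof (rule ccontr)
    assume "\<not> first_gap q < length q"
    then have "takeWhile (\<lambda>x. x \<noteq> 0) q = q"
      unfolding first_gap_def by (subst takeWhile_eq_take) simp
    then show False
      using assms by (auto simp: takeWhile_eq_all_conv)
  qed
  show "q ! first_gap q = 0"
    using nth_length_takeWhile less unfolding first_gap_def by fastforce
  show "q ! k \<noteq> 0" if "k < first_gap q"
  proof -
    have "takeWhile (\<lambda>x. x \<noteq> 0) q ! k \<in> set (takeWhile (\<lambda>x. x \<noteq> 0) q)"
      using that unfolding first_gap_def by (rule nth_mem)
    then show ?thesis
      using that unfolding first_gap_def by (auto simp: takeWhile_nth dest: set_takeWhileD)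
  qed
qed

definition fits_profile :: "nat list \<Rightarrow> nat \<Rightarrow> nat \<Rightarrow> bool" where
  "fits_profile q i w \<longleftrightarrow> i + w \<le> length q \<and> (\<forall>k\<in>{i..<i + w}. q ! k = 0)"

definition fill_profile :: "nat list \<Rightarrow> nat \<Rightarrow> nat \<Rightarrow> nat \<Rightarrow> nat list" where
  "fill_profile q i w h = map (\<lambda>k. if k \<in> {i..<i + w} then h else q ! k) [0..<length q]"

lemma length_fill_profile [simp]: "length (fill_profile q i w h) = length q"
  by (simp add: fill_profile_def)

lemma nth_fill_profile:
  "k < length q \<Longrightarrow> fill_profile q i w h ! k = (if k \<in> {i..<i + w} then h else q ! k)"
  by (simp add: fill_profile_def)

lemma profile_region_diff_tile:
  assumes "fits_profile q i w"
  shows "profile_region q L - {i..<i + w} \<times> {0..<h} = profile_region (fill_profile q i w h) L"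
proof (intro set_eqI iffI)
  fix c assume "c \<in> profile_region q L - {i..<i + w} \<times> {0..<h}"
  then show "c \<in> profile_region (fill_profile q i w h) L"
    by (auto simp: profile_region_def nth_fill_profile)
next
  fix c assume c: "c \<in> profile_region (fill_profile q i w h) L"
  then have "q ! fst c \<le> snd c"
    using assms by (auto simp: profile_region_def fits_profile_def nth_fill_profile split: if_splits)
  with c show "c \<in> profile_region q L - {i..<i + w} \<times> {0..<h}"
    by (auto simp: profile_region_def nth_fill_profile)
qed

lemma sum_list_fill_profile:
  assumes "fits_profile q i w"
  shows "sum_list (fill_profile q i w h) = sum_list q + w * h"
proof -
  have "{..<length q} \<inter> {i..<i + w} = {i..<i + w}"
    using assms by (auto simp: fits_profile_def)
  then have gap: "(\<Sum>k<length q. if k \<in> {i..<i + w} then h else 0) = w * h"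
    by (simp add: sum.inter_restrict[symmetric] del: atLeastLessThan_iff)
  have "sum_list (fill_profile q i w h) = (\<Sum>k<length q. if k \<in> {i..<i + w} then h else q ! k)"
    unfolding fill_profile_def by (simp add: atLeast0LessThan flip: sum_set_upt_conv_sum_list_nat)
  also have "\<dots> = (\<Sum>k<length q. q ! k + (if k \<in> {i..<i + w} then h else 0))"
    using assms by (intro sum.cong) (auto simp: fits_profile_def)
  also have "\<dots> = sum_list q + w * h"
    by (simp only: sum.distrib gap sum_list_sum_nth atLeast0LessThan)
  finally show ?thesis .
qed

(* Subtracting the minimal height translates the region down (profile_count_normalize);
   this keeps the set of reachable profiles finite. *)
definition normalize_profile :: "nat list \<Rightarrow> nat list \<times> nat" where
  "normalize_profile p = (map (\<lambda>x. x - Min (set p)) p, Min (set p))"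

lemma sum_list_map_diff:
  "\<forall>x\<in>set xs. m \<le> x \<Longrightarrow> sum_list (map (\<lambda>x. x - m) xs) + length xs * m = sum_list xs"
  by (induction xs) auto

(* An entry of q above L means a tile already sticks out of the rectangle of length L; counting
   such states as 0, rather than by the clipped region, makes the transfer equation exact. *)
definition profile_count :: "nat \<Rightarrow> nat \<Rightarrow> nat list \<Rightarrow> nat \<Rightarrow> nat" where
  "profile_count a b q L =
     (if \<forall>x\<in>set q. x \<le> L then card (tilings a b (profile_region q L)) else 0)"

lemma profile_count_eq_0:
  assumes "length q * L < sum_list q"
  shows "profile_count a b q L = 0"
proof -
  have "sum_list q \<le> length q * L" if "\<forall>x\<in>set q. x \<le> L"
    using that by (induction q) auto
  then show ?thesis
    using assms by (auto simp: profile_count_def)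
qed

lemma profile_count_normalize:
  assumes "0 < a" "0 < b" "p \<noteq> []" "normalize_profile p = (q, d)"
  shows "profile_count a b p L = (if d \<le> L then profile_count a b q (L - d) else 0)"
proof -
  have d: "d = Min (set p)" and q: "q = map (\<lambda>x. x - d) p"
    using assms(4) by (auto simp: normalize_profile_def)
  have "d \<in> set p"
    using assms(3) d by simp
  have le_d: "\<forall>x\<in>set p. d \<le> x"
    using d by simp
  show ?thesis
  proof (cases "d \<le> L")
    case True
    define L' where "L' = L - d"
    then have L: "L = L' + d"
      using True by simp
    have "(\<forall>x\<in>set p. x \<le> L) \<longleftrightarrow> (\<forall>x\<in>set q. x \<le> L')"
      using le_d by (auto simp: q L)
    moreover have "profile_region p L = apsnd (\<lambda>y. y + d) ` profile_region q L'"
      unfolding L q by (rule profile_region_shift[OF le_d])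
    then have "card (tilings a b (profile_region p L)) = card (tilings a b (profile_region q L'))"
      by (simp only: card_tilings_shift[OF assms(1,2)])
    ultimately show ?thesis
      unfolding profile_count_def L'_def[symmetric] using True by presburger
  next
    case False
    with \<open>d \<in> set p\<close> have "\<not> (\<forall>x\<in>set p. x \<le> L)"
      by auto
    then have "profile_count a b p L = 0"
      unfolding profile_count_def by (rule if_not_P)
    with False show ?thesis
      by simp
  qed
qed

section \<open>The transfer equation\<close>

(* Every tiling covers the lowest uncovered cell (first_gap q, 0) by a tile with its corner
   there; the placements list the orientations of such a tile that fit. *)
definition gap_placements :: "nat \<Rightarrow> nat \<Rightarrow> nat list \<Rightarrow> (nat \<times> nat) list" where
  "gap_placements a b q =
     filter (\<lambda>(w, h). fits_profile q (first_gap q) w) (remdups [(a, b), (b, a)])"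

definition successors :: "nat \<Rightarrow> nat \<Rightarrow> nat list \<Rightarrow> (nat list \<times> nat) list" where
  "successors a b q =
     map (\<lambda>(w, h). normalize_profile (fill_profile q (first_gap q) w h)) (gap_placements a b q)"

lemma mem_gap_placements:
  "(w, h) \<in> set (gap_placements a b q) \<longleftrightarrow>
     (w, h) \<in> {(a, b), (b, a)} \<and> fits_profile q (first_gap q) w"
  unfolding gap_placements_def set_filter set_remdups by auto

lemma successor_profile:
  assumes "(q', d) \<in> set (successors a b q)"
  shows length_successor: "length q' = length q"
    and sum_list_successor: "sum_list q' + length q * d = sum_list q + a * b"
proof -
  obtain w h where "(w, h) \<in> set (gap_placements a b q)"
    and normalize: "normalize_profile (fill_profile q (first_gap q) w h) = (q', d)"
    using assms unfolding successors_def by force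
  then have wh: "(w, h) \<in> {(a, b), (b, a)}" "fits_profile q (first_gap q) w"
    by (simp_all add: mem_gap_placements)
  define p where "p = fill_profile q (first_gap q) w h"
  have q': "q' = map (\<lambda>x. x - d) p" and d: "d = Min (set p)"
    using normalize by (auto simp: normalize_profile_def p_def)
  show "length q' = length q"
    by (simp add: q' p_def)
  have "sum_list q' + length p * d = sum_list p"
    unfolding q' by (rule sum_list_map_diff) (simp add: d)
  moreover have "sum_list p = sum_list q + a * b"
    using wh by (auto simp: p_def sum_list_fill_profile)
  ultimately show "sum_list q' + length q * d = sum_list q + a * b"
    by (simp add: p_def)
qed

lemma tile_covering_first_gap:
  assumes "0 < a" "0 < b" "0 \<in> set q"
    and "is_tile a b t" "(first_gap q, 0) \<in> t" and sub: "t \<subseteq> profile_region q L"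
  obtains w h where "(w, h) \<in> set (gap_placements a b q)" "h \<le> L"
    and "t = {first_gap q..<first_gap q + w} \<times> {0..<h}"
proof -
  let ?i = "first_gap q"
  obtain x y w h where wh: "(w, h) \<in> {(a, b), (b, a)}" and t: "t = {x..<x + w} \<times> {y..<y + h}"
    using assms(4) unfolding is_tile_iff by blast
  with \<open>(?i, 0) \<in> t\<close> have y: "y = 0" and "x \<le> ?i"
    by auto
  have pos: "0 < w" "0 < h"
    using wh assms(1,2) by auto
  have "(x, 0) \<in> profile_region q L"
    using sub pos unfolding t y by auto
  then have "q ! x = 0"
    by (simp add: profile_region_def)
  then have x: "x = ?i"
    using \<open>x \<le> ?i\<close> nth_less_first_gap[OF assms(3)] le_neq_implies_less by blast
  have bottom: "(k, 0) \<in> profile_region q L" if "k \<in> {?i..<?i + w}" for k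
    using that sub pos unfolding t x y by auto
  then have "?i + w - 1 < length q"
    using pos by (simp add: profile_region_def)
  with bottom have "fits_profile q ?i w"
    by (auto simp: fits_profile_def profile_region_def)
  moreover have "(?i, h - 1) \<in> profile_region q L"
    using sub pos unfolding t x y by auto
  then have "h \<le> L"
    using pos(2) by (simp add: profile_region_def, linarith)
  ultimately show ?thesis
    using wh that by (simp add: mem_gap_placements t x y)
qed

lemma gap_tile_covers_first_gap:
  assumes "0 < a" "0 < b" "(w, h) \<in> set (gap_placements a b q)" "h \<le> L"
  defines "t \<equiv> {first_gap q..<first_gap q + w} \<times> {0..<h}"
  shows "is_tile a b t" and "(first_gap q, 0) \<in> t" and "t \<subseteq> profile_region q L"
proof -
  have wh: "(w, h) \<in> {(a, b), (b, a)}" and fits: "fits_profile q (first_gap q) w"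
    using assms(3) by (simp_all add: mem_gap_placements)
  show "is_tile a b t"
    using wh unfolding is_tile_iff t_def
    by (intro exI[of _ "first_gap q"] exI[of _ 0] exI[of _ w] exI[of _ h]) simp
  show "(first_gap q, 0) \<in> t"
    using wh assms(1,2) by (auto simp: t_def)
  show "t \<subseteq> profile_region q L"
  proof
    fix c assume "c \<in> t"
    then have "fst c \<in> {first_gap q..<first_gap q + w}" "snd c < h"
      by (auto simp: t_def)
    then show "c \<in> profile_region q L"
      using fits assms(4) by (cases c) (simp add: profile_region_def fits_profile_def)
  qed
qed

lemma tiles_at_first_gap:
  assumes "0 < a" "0 < b" "0 \<in> set q"
  shows "{t. is_tile a b t \<and> (first_gap q, 0) \<in> t \<and> t \<subseteq> profile_region q L} =
    (\<lambda>(w, h). {first_gap q..<first_gap q + w} \<times> {0..<h}) `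
      {p \<in> set (gap_placements a b q). snd p \<le> L}"
proof (intro equalityI subsetI)
  fix t assume "t \<in> {t. is_tile a b t \<and> (first_gap q, 0) \<in> t \<and> t \<subseteq> profile_region q L}"
  then obtain w h where "(w, h) \<in> set (gap_placements a b q)" "h \<le> L"
    and "t = {first_gap q..<first_gap q + w} \<times> {0..<h}"
    using tile_covering_first_gap[OF assms] by blast
  then show "t \<in> (\<lambda>(w, h). {first_gap q..<first_gap q + w} \<times> {0..<h}) `
      {p \<in> set (gap_placements a b q). snd p \<le> L}"
    by force
next
  fix t assume "t \<in> (\<lambda>(w, h). {first_gap q..<first_gap q + w} \<times> {0..<h}) `
      {p \<in> set (gap_placements a b q). snd p \<le> L}"
  then obtain w h where "(w, h) \<in> set (gap_placements a b q)" "h \<le> L"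
    and "t = {first_gap q..<first_gap q + w} \<times> {0..<h}"
    by auto
  then show "t \<in> {t. is_tile a b t \<and> (first_gap q, 0) \<in> t \<and> t \<subseteq> profile_region q L}"
    using gap_tile_covers_first_gap[OF assms(1,2)] by simp
qed

lemma distinct_gap_placements: "distinct (gap_placements a b q)"
  unfolding gap_placements_def by (intro distinct_filter distinct_remdups)

lemma inj_on_gap_tile:
  "inj_on (\<lambda>(w, h). {i..<i + w} \<times> {0..<h}) {(w, h). 0 < w \<and> 0 < (h::nat)}"
  for i :: nat
proof (rule inj_onI, clarsimp)
  fix w h w' h' :: nat
  assume pos: "0 < w" "0 < h" "0 < w'" "0 < h'"
    and eq: "{i..<i + w} \<times> {0..<h} = {i..<i + w'} \<times> {0..<h'}"
  have "{i..<i + w} = {i..<i + w'}" "{0..<h} = {0..<h'}"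
    using eq pos by (simp_all add: times_eq_iff)
  then have "card {i..<i + w} = card {i..<i + w'}" "card {0..<h} = card {0..<h'}"
    by simp_all
  then show "w = w' \<and> h = h'"
    by simp
qed

lemma sum_successors:
  assumes "0 < a" "0 < b" "0 \<in> set q"
  shows "(\<Sum>(q', d)\<leftarrow>successors a b q. if d \<le> L then profile_count a b q' (L - d) else 0) =
    (\<Sum>(w, h)\<in>set (gap_placements a b q). profile_count a b (fill_profile q (first_gap q) w h) L)"
proof -
  define F where "F = (\<lambda>(q', d). if d \<le> L then profile_count a b q' (L - d) else 0)"
  define G where "G = (\<lambda>(w, h). normalize_profile (fill_profile q (first_gap q) w h))"
  have FG: "F (G (w, h)) = profile_count a b (fill_profile q (first_gap q) w h) L" for w h
  proof -
    obtain q' d where normalize: "normalize_profile (fill_profile q (first_gap q) w h) = (q', d)"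
      by fastforce
    have "length (fill_profile q (first_gap q) w h) \<noteq> 0"
      using assms(3) by auto
    then have "fill_profile q (first_gap q) w h \<noteq> []"
      by blast
    then show ?thesis
      using profile_count_normalize[OF assms(1,2) _ normalize] by (simp add: F_def G_def normalize)
  qed
  have "(\<Sum>x\<leftarrow>gap_placements a b q. F (G x)) = (\<Sum>x\<in>set (gap_placements a b q). F (G x))"
    by (rule sum_list_distinct_conv_sum_set[OF distinct_gap_placements])
  also have "\<dots> =
      (\<Sum>(w, h)\<in>set (gap_placements a b q). profile_count a b (fill_profile q (first_gap q) w h) L)"
    by (rule sum.cong[OF refl]) (use FG in auto)
  finally show ?thesis
    by (simp add: successors_def F_def G_def comp_def)
qed

lemma fill_profile_le_iff:
  assumes "fits_profile q i w" "0 < w"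
  shows "(\<forall>x\<in>set (fill_profile q i w h). x \<le> L) \<longleftrightarrow> h \<le> L \<and> (\<forall>x\<in>set q. x \<le> L)"
proof -
  have i: "i < length q" and gap: "\<And>k. k \<in> {i..<i + w} \<Longrightarrow> q ! k = 0"
    using assms by (auto simp: fits_profile_def)
  have "(\<forall>x\<in>set (fill_profile q i w h). x \<le> L) \<longleftrightarrow>
      (\<forall>k<length q. (if k \<in> {i..<i + w} then h else q ! k) \<le> L)"
    by (simp add: all_set_conv_all_nth nth_fill_profile)
  also have "\<dots> \<longleftrightarrow> h \<le> L \<and> (\<forall>k<length q. q ! k \<le> L)"
  proof
    assume le: "\<forall>k<length q. (if k \<in> {i..<i + w} then h else q ! k) \<le> L"
    then have "h \<le> L"
      using i assms(2) by (metis atLeastLessThan_iff le_add1 less_add_same_cancel1 order_refl)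
    moreover have "q ! k \<le> L" if "k < length q" for k
      using le that gap[of k] by (cases "k \<in> {i..<i + w}") auto
    ultimately show "h \<le> L \<and> (\<forall>k<length q. q ! k \<le> L)"
      by blast
  qed auto
  finally show ?thesis
    by (simp add: all_set_conv_all_nth)
qed

lemma profile_count_fill_profile:
  assumes "0 < a" "0 < b" "(w, h) \<in> set (gap_placements a b q)"
  shows "profile_count a b (fill_profile q (first_gap q) w h) L =
    (if h \<le> L \<and> (\<forall>x\<in>set q. x \<le> L)
     then card (tilings a b (profile_region q L - {first_gap q..<first_gap q + w} \<times> {0..<h}))
     else 0)"
proof -
  have "fits_profile q (first_gap q) w" "0 < w"
    using assms by (auto simp: mem_gap_placements)
  then show ?thesis
    by (simp add: profile_count_def fill_profile_le_iff profile_region_diff_tile)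
qed

lemma card_tilings_profile_region:
  assumes "0 < a" "0 < b" "0 \<in> set q" "\<forall>x\<in>set q. x \<le> L" "0 < L"
  shows "card (tilings a b (profile_region q L)) =
    (\<Sum>(w, h)\<in>set (gap_placements a b q). profile_count a b (fill_profile q (first_gap q) w h) L)"
proof -
  define i where "i = first_gap q"
  define P where "P = set (gap_placements a b q)"
  define tile where "tile = (\<lambda>(w, h). {i..<i + w} \<times> {0..<h::nat})"
  have "i < length q" "q ! i = 0"
    using first_gap[OF assms(3)] by (simp_all add: i_def)
  then have cell: "(i, 0) \<in> profile_region q L"
    using assms(5) by (simp add: profile_region_def)
  have "{p \<in> P. snd p \<le> L} \<subseteq> {(w, h). 0 < w \<and> 0 < h}"
    using assms(1,2) by (auto simp: P_def mem_gap_placements)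
  then have inj: "inj_on tile {p \<in> P. snd p \<le> L}"
    unfolding tile_def by (rule inj_on_subset[OF inj_on_gap_tile])
  have "card (tilings a b (profile_region q L)) =
      (\<Sum>t\<in>tile ` {p \<in> P. snd p \<le> L}. card (tilings a b (profile_region q L - t)))"
    using card_tilings_cover_cell[OF finite_profile_region cell]
      tiles_at_first_gap[OF assms(1-3)] by (simp add: tile_def P_def i_def)
  also have "\<dots> = (\<Sum>p\<in>{p \<in> P. snd p \<le> L}. card (tilings a b (profile_region q L - tile p)))"
    by (simp only: sum.reindex[OF inj] comp_def)
  also have "\<dots> = (\<Sum>p\<in>P. if snd p \<le> L then card (tilings a b (profile_region q L - tile p)) else 0)"
    by (simp add: P_def sum.inter_filter)
  also have "\<dots> = (\<Sum>(w, h)\<in>P. profile_count a b (fill_profile q i w h) L)"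
    using assms(1,2,4) by (intro sum.cong) (auto simp: P_def i_def tile_def profile_count_fill_profile)
  finally show ?thesis
    by (simp add: P_def i_def)
qed

lemma profile_count_step:
  assumes "0 < a" "0 < b" "0 \<in> set q"
  shows "profile_count a b q L = (if L = 0 \<and> (\<forall>x\<in>set q. x = 0) then 1 else 0) +
    (\<Sum>(q', d)\<leftarrow>successors a b q. if d \<le> L then profile_count a b q' (L - d) else 0)"
proof -
  let ?P = "set (gap_placements a b q)"
  let ?fill = "\<lambda>(w, h). profile_count a b (fill_profile q (first_gap q) w h) L"
  consider (high) "\<not> (\<forall>x\<in>set q. x \<le> L)" | (empty) "\<forall>x\<in>set q. x \<le> L" "L = 0"
    | (main) "\<forall>x\<in>set q. x \<le> L" "0 < L"
    by blast
  then have "profile_count a b q L = (if L = 0 \<and> (\<forall>x\<in>set q. x = 0) then 1 else 0) + sum ?fill ?P"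
  proof cases
    case high
    then have "profile_count a b q L = 0"
      unfolding profile_count_def by (rule if_not_P)
    moreover have "sum ?fill ?P = 0"
      using high assms(1,2) by (intro sum.neutral) (auto simp: profile_count_fill_profile)
    moreover have "\<not> (L = 0 \<and> (\<forall>x\<in>set q. x = 0))"
      using high by auto
    ultimately show ?thesis
      by simp
  next
    case empty
    then have "profile_region q L = {}"
      by (simp add: profile_region_def)
    then have "profile_count a b q L = 1"
      using empty assms(1,2) by (simp add: profile_count_def tilings_empty)
    moreover have "sum ?fill ?P = 0"
      using empty assms(1,2)
      by (intro sum.neutral) (auto simp: profile_count_fill_profile mem_gap_placements)
    ultimately show ?thesis
      using empty by simp
  next
    case main
    then show ?thesis
      using card_tilings_profile_region[OF assms] by (simp add: profile_count_def)
  qed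
  then show ?thesis
    by (simp only: sum_successors[OF assms])
qed

(* N tiles above q cover sum_list q + a * b * N cells of a rectangle of width length q,
   which determines its length. *)
definition profile_tile_count :: "nat \<Rightarrow> nat \<Rightarrow> nat list \<Rightarrow> nat \<Rightarrow> nat" where
  "profile_tile_count a b q N =
     (if length q dvd sum_list q + a * b * N
      then profile_count a b q ((sum_list q + a * b * N) div length q) else 0)"

lemma profile_tile_count_0:
  assumes "0 < a" "0 < b" "0 \<in> set q"
  shows "profile_tile_count a b q 0 = (if \<forall>x\<in>set q. x = 0 then 1 else 0)"
proof (cases "length q dvd sum_list q")
  case False
  then have "\<not> (\<forall>x\<in>set q. x = 0)"
    by (metis dvd_0_right sum_list_eq_0_iff)
  with False show ?thesis
    by (simp add: profile_tile_count_def)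
next
  case True
  define L where "L = sum_list q div length q"
  have wL: "length q * L = sum_list q"
    using True by (simp add: L_def)
  have "(if d \<le> L then profile_count a b q' (L - d) else 0) = 0"
    if succ: "(q', d) \<in> set (successors a b q)" for q' d
  proof (cases "d \<le> L")
    case True
    have "length q * (L - d) + length q * d = length q * L"
      using True by (simp flip: add_mult_distrib2)
    moreover have "0 < a * b"
      using assms(1,2) by simp
    ultimately have "length q * (L - d) < sum_list q'"
      using sum_list_successor[OF succ] wL by linarith
    then have "length q' * (L - d) < sum_list q'"
      by (simp add: length_successor[OF succ])
    then show ?thesis
      using True by (simp add: profile_count_eq_0)
  qed simp
  then have "(\<Sum>(q', d)\<leftarrow>successors a b q. if d \<le> L then profile_count a b q' (L - d) else 0) = 0"
    by (auto simp: sum_list_eq_0_iff)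
  moreover have "L = 0" if "\<forall>x\<in>set q. x = 0"
  proof -
    have sum_0: "sum_list q = 0"
      using that by simp
    show ?thesis
      unfolding L_def sum_0 by simp
  qed
  ultimately show ?thesis
    using True profile_count_step[OF assms, of L] by (auto simp: profile_tile_count_def L_def)
qed

lemma profile_tile_count_successor:
  fixes N :: nat
  assumes succ: "(q', d) \<in> set (successors a b q)" and "0 \<in> set q"
  defines "w \<equiv> length q" and "s \<equiv> sum_list q + a * b * Suc N"
  shows "profile_tile_count a b q' N =
    (if w dvd s \<and> d \<le> s div w then profile_count a b q' (s div w - d) else 0)"
proof -
  define s' where "s' = sum_list q' + a * b * N"
  have "0 < w"
    using assms(2) by (auto simp: w_def)
  have s: "s = s' + d * w"
    using sum_list_successor[OF succ] by (simp add: s_def s'_def w_def algebra_simps)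
  have "w dvd s \<longleftrightarrow> w dvd s'" and "s div w = d + s' div w"
    using \<open>0 < w\<close> by (simp_all add: s)
  then show ?thesis
    using length_successor[OF succ] by (simp add: profile_tile_count_def s'_def w_def)
qed

lemma profile_tile_count_Suc:
  assumes "0 < a" "0 < b" "0 \<in> set q"
  shows "profile_tile_count a b q (Suc N) =
    (\<Sum>q'\<leftarrow>map fst (successors a b q). profile_tile_count a b q' N)"
proof -
  define w where "w = length q"
  define s where "s = sum_list q + a * b * Suc N"
  note successor = profile_tile_count_successor[OF _ assms(3), of _ _ a b N, folded w_def s_def]
  show ?thesis
  proof (cases "w dvd s")
    case False
    then have "profile_tile_count a b q' N = 0" if "q' \<in> set (map fst (successors a b q))" for q'
      using that successor by force
    moreover have "profile_tile_count a b q (Suc N) = 0"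
      using False by (simp add: profile_tile_count_def s_def w_def)
    ultimately show ?thesis
      by (simp add: sum_list_eq_0_iff)
  next
    case True
    define L where "L = s div w"
    have "w * L = s"
      using True by (simp add: L_def)
    moreover have "0 < s"
      using assms(1,2) by (simp add: s_def)
    ultimately have "0 < L"
      by (cases "L = 0") auto
    have "profile_tile_count a b q (Suc N) = profile_count a b q L"
      using True by (simp add: profile_tile_count_def L_def s_def w_def)
    also have "\<dots> = (\<Sum>(q', d)\<leftarrow>successors a b q. if d \<le> L then profile_count a b q' (L - d) else 0)"
      using profile_count_step[OF assms, of L] \<open>0 < L\<close> by simp
    also have "\<dots> = (\<Sum>(q', d)\<leftarrow>successors a b q. profile_tile_count a b q' N)"
      using successor True by (intro arg_cong[where f = sum_list] map_cong) (auto simp: L_def)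
    finally show ?thesis
      by (simp add: case_prod_unfold comp_def)
  qed
qed

section \<open>Generating functions and certificates\<close>

definition profile_series :: "nat \<Rightarrow> nat \<Rightarrow> nat list \<Rightarrow> 'a::comm_semiring_1 fps" where
  "profile_series a b q = Abs_fps (\<lambda>N. of_nat (profile_tile_count a b q N))"

lemma fps_nth_sum_list: "sum_list fs $ n = (\<Sum>f\<leftarrow>fs. f $ n)"
  by (induction fs) simp_all

lemma profile_series_step:
  assumes "0 < a" "0 < b" "0 \<in> set q"
  shows "profile_series a b q = (if \<forall>x\<in>set q. x = 0 then 1 else 0) +
    fps_X * (\<Sum>q'\<leftarrow>map fst (successors a b q). profile_series a b q')"
proof (rule fps_ext)
  fix n
  show "profile_series a b q $ n = ((if \<forall>x\<in>set q. x = 0 then 1 else 0) +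
      fps_X * (\<Sum>q'\<leftarrow>map fst (successors a b q). profile_series a b q')) $ n"
  proof (cases n)
    case 0
    then show ?thesis
      by (simp add: profile_series_def profile_tile_count_0[OF assms])
  next
    case (Suc N)
    then show ?thesis
      by (simp add: profile_series_def profile_tile_count_Suc[OF assms] fps_nth_sum_list
          comp_def flip: sum_list_of_nat)
  qed
qed

(* D is a common denominator and P q the numerator of the series of profile q: the transfer
   equation multiplied by D, as an identity of polynomials. *)
definition transfer_certificate ::
    "nat \<Rightarrow> nat \<Rightarrow> 'a::comm_ring_1 poly \<Rightarrow> (nat list \<Rightarrow> 'a poly) \<Rightarrow> nat list list \<Rightarrow> bool" where
  "transfer_certificate a b D P S \<longleftrightarrow>
     (\<forall>q\<in>set S. 0 \<in> set q \<and> set (map fst (successors a b q)) \<subseteq> set S \<and>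
        P q = (if \<forall>x\<in>set q. x = 0 then D else 0) + pCons 0 (\<Sum>q'\<leftarrow>map fst (successors a b q). P q'))"

lemma transfer_certificate_residual:
  fixes D :: "'a::comm_ring_1 poly"
  assumes "transfer_certificate a b D P S" "0 < a" "0 < b" "q \<in> set S"
  defines "E \<equiv> \<lambda>q. fps_of_poly D * profile_series a b q - fps_of_poly (P q)"
  shows "E q = fps_X * (\<Sum>q'\<leftarrow>map fst (successors a b q). E q')"
proof -
  let ?succ = "map fst (successors a b q)"
  define z where "z \<longleftrightarrow> (\<forall>x\<in>set q. x = 0)"
  let ?init = "if z then fps_of_poly D else 0"
  have "0 \<in> set q" and P: "P q = (if z then D else 0) + pCons 0 (\<Sum>q'\<leftarrow>?succ. P q')"
    using assms(1,4) by (auto simp: transfer_certificate_def z_def)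
  have series: "profile_series a b q =
      (if z then 1 else 0) + fps_X * (\<Sum>q'\<leftarrow>?succ. profile_series a b q')"
    unfolding z_def by (rule profile_series_step[OF assms(2,3) \<open>0 \<in> set q\<close>])
  have "fps_of_poly D * profile_series a b q =
      ?init + fps_X * (fps_of_poly D * (\<Sum>q'\<leftarrow>?succ. profile_series a b q'))"
    by (cases z) (simp_all add: series algebra_simps)
  also have "\<dots> = ?init + fps_X * (\<Sum>q'\<leftarrow>?succ. fps_of_poly D * profile_series a b q')"
    by (simp only: sum_list_const_mult)
  finally have "fps_of_poly D * profile_series a b q =
      ?init + fps_X * (\<Sum>q'\<leftarrow>?succ. fps_of_poly D * profile_series a b q')" .
  moreover have "fps_of_poly (P q) = ?init + fps_X * (\<Sum>q'\<leftarrow>?succ. fps_of_poly (P q'))"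
    by (subst P) (simp add: fps_of_poly_add fps_of_poly_pCons fps_of_poly_sum_list comp_def
        mult.commute)
  ultimately have "E q = fps_X * ((\<Sum>q'\<leftarrow>?succ. fps_of_poly D * profile_series a b q') -
      (\<Sum>q'\<leftarrow>?succ. fps_of_poly (P q')))"
    unfolding E_def by (simp only: right_diff_distrib add_diff_cancel_left)
  also have "\<dots> = fps_X * (\<Sum>q'\<leftarrow>?succ. E q')"
    by (simp only: E_def sum_list_subtractf)
  finally show ?thesis .
qed

(* The residual satisfies E = X * (sum of residuals of successors), so by induction every
   coefficient vanishes. *)
theorem transfer_certificate_solves:
  assumes "transfer_certificate a b D P S" "0 < a" "0 < b" "q \<in> set S"
  shows "fps_of_poly D * profile_series a b q = fps_of_poly (P q)"
proof -
  define E where "E q = fps_of_poly D * profile_series a b q - fps_of_poly (P q)" for q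
  note E_step = transfer_certificate_residual[OF assms(1-3), folded E_def]
  have "\<forall>q\<in>set S. E q $ n = 0" for n
  proof (induction n)
    case 0
    show ?case
      using E_step by simp
  next
    case (Suc n)
    show ?case
    proof
      fix q assume q: "q \<in> set S"
      then have "set (map fst (successors a b q)) \<subseteq> set S"
        using assms(1) by (simp add: transfer_certificate_def)
      then have "map (\<lambda>q'. E q' $ n) (map fst (successors a b q)) =
          map (\<lambda>_. 0) (map fst (successors a b q))"
        using Suc.IH by (intro map_cong) auto
      then have "(\<Sum>q'\<leftarrow>map fst (successors a b q). E q' $ n) = 0"
        by (simp only: sum_list_0)
      then show "E q $ Suc n = 0"
        using E_step[OF q] by (simp add: fps_nth_sum_list comp_def)
    qed
  qed
  then have "E q = 0"
    using assms(4) by (intro fps_ext) simp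
  then show ?thesis
    by (simp add: E_def)
qed

section \<open>Tilings of the 8 x n rectangle by 2 x 3 tiles\<close>

lemma num_tilings_eq_card_tilings:
  assumes "0 < a" "0 < b" "m * n = a * b * N"
  shows "num_tilings a b m n N = card (tilings a b (rect m n))"
proof -
  have "card T = N" if "T \<in> tilings a b (rect m n)" for T
    using card_tiling[OF _ that] assms by (simp add: rect_def card_cartesian_product)
  then have "{T. is_tiling a b m n T \<and> card T = N} = tilings a b (rect m n)"
    by (auto simp: is_tiling_iff_mem_tilings)
  then show ?thesis
    by (simp add: num_tilings_def)
qed

lemma profile_tile_count_replicate_0:
  "profile_tile_count a b (replicate m 0) N =
    (if m dvd a * b * N then card (tilings a b (rect m (a * b * N div m))) else 0)"
  by (simp add: profile_tile_count_def profile_count_def profile_region_replicate_0 sum_list_replicate)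

lemma T23_8_eq_profile_tile_count: "T23_8 N = profile_tile_count 2 3 (replicate 8 0) N"
proof -
  have "4 dvd 3 * N \<longleftrightarrow> 8 dvd 2 * 3 * N" and "3 * N div 4 = 2 * 3 * N div 8"
    by presburger+
  moreover have "8 * (2 * 3 * N div 8) = 2 * 3 * N" if "8 dvd 2 * 3 * N"
    using that by simp
  ultimately show ?thesis
    by (simp add: T23_8_def profile_tile_count_replicate_0 num_tilings_eq_card_tilings)
qed

(* The profiles reachable from the flat one, with the coefficients of their numerators;
   obtained by solving the transfer equations, and verified by tiling_certificate. *)
definition numerator_table :: "(nat list \<times> rat list) list" where
  "numerator_table = [
    ([0, 0, 0, 0, 0, 0, 0, 0], [1, 0, 0, 0, -2, 0, 0, 0, 1]),
    ([0, 0, 0, 0, 0, 0, 1, 1], [0, 0, 0, 0, 0, 1]),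
    ([0, 0, 0, 0, 0, 0, 2, 2], [0, 0, 1, 0, 0, 0, -1]),
    ([0, 0, 0, 1, 1, 0, 0, 0], [0, 0, 0, 0, 0, 1, 0, 0, 0, -2, 0, 0, 0, 1]),
    ([0, 0, 0, 2, 2, 0, 0, 0], [0, 0, 1, 0, 0, 0, -2, 0, 0, 0, 1]),
    ([0, 0, 1, 1, 1, 1, 1, 1], [0, 0, 0, 1, 0, 0, 0, -1]),
    ([0, 0, 2, 2, 2, 2, 2, 2], [0, 0, 0, 0, 0, 0, 1]),
    ([1, 1, 0, 0, 0, 0, 0, 0], [0, 0, 0, 0, 0, 1]),
    ([1, 1, 1, 0, 0, 1, 1, 1], [0, 0, 0, 1, 0, 0, 0, -2, 0, 0, 0, 1]),
    ([1, 1, 1, 1, 1, 1, 0, 0], [0, 0, 0, 1, 0, 0, 0, -1]),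
    ([1, 1, 2, 2, 2, 0, 0, 0], [0, 0, 0, 0, 1, 0, 0, 0, -1]),
    ([1, 1, 2, 2, 2, 3, 3, 0], []),
    ([1, 1, 3, 3, 0, 0, 0, 0], [0, 0, 0, 0, 0, 0, 0, 0, 1]),
    ([1, 1, 3, 3, 2, 2, 2, 0], []),
    ([1, 1, 3, 3, 3, 3, 0, 0], [0, 0, 0, 0, 0, 0, 0, 1]),
    ([2, 2, 0, 0, 0, 0, 0, 0], [0, 0, 1, 0, 0, 0, -1]),
    ([2, 2, 2, 0, 0, 0, 0, 0], [0, 0, 0, 0, 0, 0, 0, 2, 0, 0, 0, -2, 0, 0, 0, 1]),
    ([2, 2, 2, 0, 0, 0, 1, 1], [0, 0, 0, 0, 1, 0, 0, 0, -1]),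
    ([2, 2, 2, 0, 0, 0, 2, 2], [0, 1, 0, 0, 0, -2, 0, 0, 0, 1]),
    ([2, 2, 2, 1, 1, 0, 0, 0], [0, 0, 0, 0, 1, 0, 0, 0, -2, 0, 0, 0, 1]),
    ([2, 2, 2, 1, 1, 3, 3, 0], []),
    ([2, 2, 2, 2, 2, 0, 0, 0], [0, 1, 0, 0, 0, -2, 0, 0, 0, 1]),
    ([2, 2, 2, 2, 2, 2, 0, 0], [0, 0, 0, 0, 0, 0, 1]),
    ([2, 2, 2, 2, 2, 3, 3, 0], []),
    ([2, 2, 2, 3, 3, 0, 0, 0], [0, 0, 0, 0, 0, 0, 1, 0, 0, 0, -2, 0, 0, 0, 1]),
    ([2, 2, 2, 3, 3, 0, 1, 1], []),
    ([2, 2, 2, 3, 3, 0, 2, 2], []),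
    ([2, 2, 2, 3, 3, 3, 3, 0], []),
    ([2, 2, 3, 3, 0, 0, 0, 0], [0, 0, 0, 0, 0, 1, 0, 0, 0, -1]),
    ([2, 2, 3, 3, 2, 2, 2, 0], []),
    ([2, 2, 3, 3, 3, 3, 0, 0], [0, 0, 0, 0, 1, 0, 0, 0, -1]),
    ([3, 3, 0, 0, 0, 0, 0, 0], [0, 0, 0, 1, 0, 0, 0, -1, 0, 0, 0, 1]),
    ([3, 3, 0, 0, 0, 0, 1, 1], [0, 0, 0, 0, 0, 0, 0, 0, 1]),
    ([3, 3, 0, 0, 0, 0, 2, 2], [0, 0, 0, 0, 0, 1, 0, 0, 0, -1]),
    ([3, 3, 0, 1, 1, 0, 0, 0], []),
    ([3, 3, 0, 2, 2, 0, 0, 0], []),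
    ([3, 3, 2, 2, 2, 0, 0, 0], [0, 0, 0, 0, 0, 0, 1]),
    ([3, 3, 2, 2, 2, 0, 1, 1], []),
    ([3, 3, 2, 2, 2, 0, 2, 2], []),
    ([3, 3, 2, 2, 2, 3, 3, 0], []),
    ([3, 3, 3, 3, 0, 0, 0, 0], [0, 0, 1, 0, 0, 0, -2, 0, 0, 0, 1]),
    ([3, 3, 3, 3, 0, 0, 1, 1], [0, 0, 0, 0, 0, 0, 0, 1]),
    ([3, 3, 3, 3, 0, 0, 2, 2], [0, 0, 0, 0, 1, 0, 0, 0, -1]),
    ([3, 3, 3, 3, 2, 2, 2, 0], []),
    ([3, 3, 3, 3, 3, 3, 0, 0], [0, 1, 0, 0, 0, -2, 0, 0, 0, 1])]"

definition tiling_numerator :: "nat list \<Rightarrow> rat poly" where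
  "tiling_numerator q = poly_of_list (the (map_of numerator_table q))"

definition tiling_denominator :: "rat poly" where
  "tiling_denominator = 1 - 3 * monom 1 4 + monom 1 12 - monom 1 16"

lemma tiling_certificate:
  "transfer_certificate 2 3 tiling_denominator tiling_numerator (map fst numerator_table)"
  by code_simp

lemma tiling_numerator_replicate_0: "tiling_numerator (replicate 8 0) = (1 - monom 1 4) ^ 2"
  by code_simp

theorem mainTheorem11:
  shows "Abs_fps (\<lambda>N. of_nat (T23_8 N)) =
    ((1 - fps_X ^ 4) ^ 2 / (1 - 3 * fps_X ^ 4 + fps_X ^ 12 - fps_X ^ 16) :: rat fps)"
proof -
  let ?G = "profile_series 2 3 (replicate 8 0) :: rat fps"
  let ?D = "1 - 3 * fps_X ^ 4 + fps_X ^ 12 - fps_X ^ 16 :: rat fps"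
  have "replicate 8 0 \<in> set (map fst numerator_table)"
    by code_simp
  then have "fps_of_poly tiling_denominator * ?G = fps_of_poly (tiling_numerator (replicate 8 0))"
    by (intro transfer_certificate_solves[OF tiling_certificate]) simp_all
  then have "?G * ?D = (1 - fps_X ^ 4) ^ 2"
    by (simp add: tiling_denominator_def tiling_numerator_replicate_0 fps_of_poly_simps
        fps_of_poly_monom' mult.commute)
  moreover have "?D \<noteq> 0"
  proof
    assume "?D = 0"
    then have "?D $ 0 = 0 $ 0"
      by (rule arg_cong)
    then show False
      by (simp add: numeral_fps_const)
  qed
  ultimately have "(1 - fps_X ^ 4) ^ 2 / ?D = ?G"
    by (metis fps_divide_times_eq)
  then show ?thesis
    by (simp add: profile_series_def T23_8_eq_profile_tile_count)
qed

end
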